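(* Let $m\geq 7$ and let $\mathfrak{X}=\{A_0,A_1,A_2\}$ be a non-symmetric class $2$ association scheme of order $m$ (so $A_0=I_m$ and $A_2=A_1^T$). Let $B_1$ be the $(2m+1)\times(2m+1)$ matrix defined from $A_1$ as in the context below, let $B_0=I_{2m+1}$ and $B_2=B_1^T$. Then $\mathfrak{Y}=\{B_0,B_1,B_2\}$ is a non-symmetric class $2$ association scheme of order $2m+1$, the automorphism group $\operatorname{Aut}(\mathfrak{Y})$ is intransitive on $\{1,\dots,2m+1\}$, and hence $\mathfrak{Y}$ is non-schurian. Moreover, $\operatorname{Aut}(\mathfrak{Y})\cong\operatorname{Aut}(\mathfrak{X})$.
   Context: An association scheme of order $N$ is a set $\{A_0,\dots,A_d\}$ of $N\times N$ $0/1$-matrices such that $A_0=I_N$, $\sum_i A_i=J_N$ (all-ones matrix), each $A_i^T$ is in the set, and each product $A_iA_j$ is a linear combination of the $A_k$; $d$ is its class. It is non-symmetric of class $2$ if $d=2$ and $A_1^T=A_2\neq A_1$. The automorphism group of $\{A_0,\dots,A_d\}$ is $\{\sigma\in S_N : P_\sigma^TA_iP_\sigma=A_i \text{ for all } i\}$, where $P_\sigma$ is the permutation matrix of $\sigma$. A scheme is schurian if it arises as the set of adjacency matrices of the orbitals (orbits on pairs $(x,y)$ under $(x,y)^g=(x^g,y^g)$) of a transitive permutation group on $\{1,\dots,N\}$. Definition of $B_1$ (with $n=m+1$, indices $1\le i,j\le n-1$): $(B_1)_{i,j}=(A_1)_{ij}$, $(B_1)_{i,n}=0$, $(B_1)_{i,n+j}=(A_0+A_1)_{ij}$;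 $(B_1)_{n,j}=1$, $(B_1)_{n,n}=0$, $(B_1)_{n,n+j}=0$; $(B_1)_{n+i,j}=(A_1)_{ij}$, $(B_1)_{n+i,n}=1$, $(B_1)_{n+i,n+j}=(A_2)_{ij}$. In block form, $B_1=\begin{bmatrix} A_1 & \mathbf{0} & A_0+A_1\\ \mathbf{1}^T & 0 & \mathbf{0}^T\\ A_1 & \mathbf{1} & A_2\end{bmatrix}$ with blocks indexed by $\{1,\dots,n-1\},\{n\},\{n+1,\dots,2n-1\}$. *)

theory Defs
  imports Complex_Main "HOL-Algebra.Sym_Groups"
begin

text \<open>Matrices of order N are functions nat => nat => real, with rows and
columns indexed by {1..N}; entries outside this range are ignored.
A family A :: nat => (nat => nat => real) together with a class d represents
the set {A 0, ..., A d}.\<close>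

type_synonym mat = "nat \<Rightarrow> nat \<Rightarrow> real"

definition assoc_scheme :: "nat \<Rightarrow> nat \<Rightarrow> (nat \<Rightarrow> mat) \<Rightarrow> bool" where
  "assoc_scheme N d A \<longleftrightarrow>
     (\<forall>i\<le>d. \<forall>x\<in>{1..N}. \<forall>y\<in>{1..N}. A i x y = 0 \<or> A i x y = 1) \<and>
     (\<forall>x\<in>{1..N}. \<forall>y\<in>{1..N}. A 0 x y = (if x = y then 1 else 0)) \<and>
     (\<forall>x\<in>{1..N}. \<forall>y\<in>{1..N}. (\<Sum>i\<le>d. A i x y) = 1) \<and>
     (\<forall>i\<le>d. \<exists>j\<le>d. \<forall>x\<in>{1..N}. \<forall>y\<in>{1..N}. A j x y = A i y x) \<and>
     (\<forall>i\<le>d. \<forall>j\<le>d. \<exists>c :: nat \<Rightarrow> real. \<forall>x\<in>{1..N}. \<forall>y\<in>{1..N}.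
         (\<Sum>z=1..N. A i x z * A j z y) = (\<Sum>k\<le>d. c k * A k x y))"

definition nonsym_class2_scheme :: "nat \<Rightarrow> (nat \<Rightarrow> mat) \<Rightarrow> bool" where
  "nonsym_class2_scheme N A \<longleftrightarrow>
     assoc_scheme N 2 A \<and>
     (\<forall>x\<in>{1..N}. \<forall>y\<in>{1..N}. A 2 x y = A 1 y x) \<and>
     (\<exists>x\<in>{1..N}. \<exists>y\<in>{1..N}. A 1 x y \<noteq> A 2 x y)"

definition perm_mat :: "(nat \<Rightarrow> nat) \<Rightarrow> mat" where
  "perm_mat \<sigma> u x = (if u = \<sigma> x then 1 else 0)"

text \<open>Automorphisms: sigma in S_N with P_sigma^T A_i P_sigma = A_i for all i.\<close>
definition aut_set :: "nat \<Rightarrow> nat \<Rightarrow> (nat \<Rightarrow> mat) \<Rightarrow> (nat \<Rightarrow> nat) set" where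
  "aut_set N d A = {\<sigma>. \<sigma> permutes {1..N} \<and>
     (\<forall>i\<le>d. \<forall>x\<in>{1..N}. \<forall>y\<in>{1..N}.
        (\<Sum>u=1..N. \<Sum>v=1..N. perm_mat \<sigma> u x * A i u v * perm_mat \<sigma> v y) = A i x y)}"

definition aut_group :: "nat \<Rightarrow> nat \<Rightarrow> (nat \<Rightarrow> mat) \<Rightarrow> (nat \<Rightarrow> nat) monoid" where
  "aut_group N d A = (sym_group N) \<lparr> carrier := aut_set N d A \<rparr>"

definition transitive_on :: "nat \<Rightarrow> (nat \<Rightarrow> nat) set \<Rightarrow> bool" where
  "transitive_on N G \<longleftrightarrow> (\<forall>x\<in>{1..N}. \<forall>y\<in>{1..N}. \<exists>g\<in>G. g x = y)"

definition mat_restr :: "nat \<Rightarrow> mat \<Rightarrow> mat" where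
  "mat_restr N M x y = (if x \<in> {1..N} \<and> y \<in> {1..N} then M x y else 0)"

definition orbital_mat :: "nat \<Rightarrow> (nat \<Rightarrow> nat) set \<Rightarrow> nat \<Rightarrow> nat \<Rightarrow> mat" where
  "orbital_mat N G a b x y =
     (if x \<in> {1..N} \<and> y \<in> {1..N} \<and> (\<exists>g\<in>G. g a = x \<and> g b = y) then 1 else 0)"

definition schurian :: "nat \<Rightarrow> nat \<Rightarrow> (nat \<Rightarrow> mat) \<Rightarrow> bool" where
  "schurian N d A \<longleftrightarrow>
     (\<exists>G. subgroup G (sym_group N) \<and> transitive_on N G \<and>
        {mat_restr N (A i) | i. i \<le> d} =
        {orbital_mat N G a b | a b. a \<in> {1..N} \<and> b \<in> {1..N}})"

definition B1 :: "nat \<Rightarrow> (nat \<Rightarrow> mat) \<Rightarrow> mat" where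
  "B1 m A x y =
     (let n = m + 1 in
      if x \<in> {1..m} then
        (if y \<in> {1..m} then A 1 x y
         else if y = n then 0
         else if y \<in> {n+1..n+m} then A 0 x (y - n) + A 1 x (y - n) else 0)
      else if x = n then
        (if y \<in> {1..m} then 1 else 0)
      else if x \<in> {n+1..n+m} then
        (if y \<in> {1..m} then A 1 (x - n) y
         else if y = n then 1
         else if y \<in> {n+1..n+m} then A 2 (x - n) (y - n) else 0)
      else 0)"

definition Bfam :: "nat \<Rightarrow> (nat \<Rightarrow> mat) \<Rightarrow> nat \<Rightarrow> mat" where
  "Bfam m A i =
     (if i = 0 then (\<lambda>x y. if x = y then 1 else 0)
      else if i = 1 then B1 m A
      else (\<lambda>x y. B1 m A y x))"

end

theory Submission
  imports Defs
begin

(* A non-symmetric class 2 scheme {I, A1, A1^T} is a doubly regular tournament: A1 is a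
   tournament matrix with all in- and out-degrees equal to k and A1^2 = l A1 + (l+1) A1^T,
   where m = 2k+1 and k = 2l+1. The matrix B1 is again a doubly regular tournament, of
   order 2m+1 with valency m and square coefficient k, so Y is a scheme. When k > 1 the
   vertex n is the only vertex of B1 with the local property apex_vertex, so every
   automorphism fixes n. Hence Aut(Y) is intransitive, and Y is not schurian, because the
   automorphism group of a schurian scheme contains a transitive group. An automorphism
   fixing n preserves its out-neighbourhood {1..m} and its in-neighbourhood {n+1..n+m}, and
   acts on both by the same automorphism of A1, since in a tournament a vertex is
   determined by its out-neighbourhood; this gives Aut(X) = Aut(Y). *)

section \<open>Doubly regular tournaments\<close>

lemma sum_atMost_2: "(\<Sum>i\<le>(2::nat). f i) = f 0 + f 1 + (f 2 :: real)"
  by (simp add: numeral_2_eq_2 atMost_Suc)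

lemma mult_indicator [simp]:
  "(a::real) * (if P then 1 else 0) = (if P then a else 0)"
  "(if P then 1 else 0) * (a::real) = (if P then a else 0)"
  by simp_all

definition tournament_family :: "mat \<Rightarrow> nat \<Rightarrow> mat" where
  "tournament_family T i =
     (if i = 0 then (\<lambda>x y. if x = y then 1 else 0)
      else if i = 1 then T else (\<lambda>x y. T y x))"

lemma Bfam_eq_tournament_family: "Bfam m A = tournament_family (B1 m A)"
  by (simp add: fun_eq_iff Bfam_def tournament_family_def)

locale doubly_regular_tournament =
  fixes N :: nat and T :: mat and k l :: real
  assumes zero_one: "\<And>x y. x \<in> {1..N} \<Longrightarrow> y \<in> {1..N} \<Longrightarrow> T x y = 0 \<or> T x y = 1"
    and diag: "\<And>x. x \<in> {1..N} \<Longrightarrow> T x x = 0"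
    and tournament: "\<And>x y. x \<in> {1..N} \<Longrightarrow> y \<in> {1..N} \<Longrightarrow> x \<noteq> y \<Longrightarrow> T x y + T y x = 1"
    and row_sum: "\<And>x. x \<in> {1..N} \<Longrightarrow> (\<Sum>z=1..N. T x z) = k"
    and col_sum: "\<And>y. y \<in> {1..N} \<Longrightarrow> (\<Sum>z=1..N. T z y) = k"
    and square: "\<And>x y. x \<in> {1..N} \<Longrightarrow> y \<in> {1..N} \<Longrightarrow>
      (\<Sum>z=1..N. T x z * T z y) = l * T x y + (l + 1) * T y x"
begin

lemma entry_cases:
  assumes "x \<in> {1..N}" "y \<in> {1..N}"
  obtains (diag) "x = y" | (arc) "x \<noteq> y" "T x y = 1" "T y x = 0"
    | (reverse_arc) "x \<noteq> y" "T x y = 0" "T y x = 1"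
  using zero_one[OF assms] tournament[OF assms] by (cases "x = y") auto

lemma converse_entry:
  assumes "x \<in> {1..N}" "y \<in> {1..N}"
  shows "T y x = 1 - T x y - (if x = y then 1 else 0)"
  by (cases rule: entry_cases[OF assms]) (use assms diag in auto)

lemma square_converse:
  assumes "x \<in> {1..N}" "y \<in> {1..N}"
  shows "(\<Sum>z=1..N. T z y * T x z) = l * T x y + (l + 1) * T y x"
proof -
  have "(\<Sum>z=1..N. T z y * T x z) = (\<Sum>z=1..N. T x z * T z y)"
    by (simp add: mult.commute)
  with square[OF assms] show ?thesis by simp
qed

lemma row_inner_product:
  assumes x: "x \<in> {1..N}" and y: "y \<in> {1..N}"
  shows "(\<Sum>z=1..N. T x z * T y z) = (if x = y then k else k - l - 1)"
proof -
  have "(\<Sum>z=1..N. T x z * T y z) = (\<Sum>z=1..N. T x z - T x z * T z y - T x z * (if z = y then 1 else 0))"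
  proof (rule sum.cong[OF refl])
    fix z assume z: "z \<in> {1..N}"
    show "T x z * T y z = T x z - T x z * T z y - T x z * (if z = y then 1 else 0)"
      by (simp only: converse_entry[OF z y]) (simp add: algebra_simps)
  qed
  also have "\<dots> = k - T x y - (l * T x y + (l + 1) * T y x)"
    using x y row_sum[OF x] square[OF x y] by (simp add: sum_subtractf)
  finally show ?thesis by (cases rule: entry_cases[OF x y]) (use x y diag in auto)
qed

lemma col_inner_product:
  assumes x: "x \<in> {1..N}" and y: "y \<in> {1..N}"
  shows "(\<Sum>z=1..N. T z x * T z y) = (if x = y then k else k - l - 1)"
proof -
  have "(\<Sum>z=1..N. T z x * T z y) = (\<Sum>z=1..N. T z y - T x z * T z y - (if z = x then 1 else 0) * T z y)"
  proof (rule sum.cong[OF refl])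
    fix z assume z: "z \<in> {1..N}"
    show "T z x * T z y = T z y - T x z * T z y - (if z = x then 1 else 0) * T z y"
      by (simp only: converse_entry[OF x z]) (auto simp: algebra_simps)
  qed
  also have "\<dots> = k - T x y - (l * T x y + (l + 1) * T y x)"
    using x y col_sum[OF y] square[OF x y] by (simp add: sum_subtractf)
  finally show ?thesis by (cases rule: entry_cases[OF x y]) (use x y diag in auto)
qed

lemma order_eq:
  assumes "N > 0" shows "real N = 2 * k + 1"
proof -
  have x: "1 \<in> {1..N}" using assms by simp
  have "(\<Sum>z=1..N. T 1 z + T z 1) = (\<Sum>z=1..N. 1 - (if z = 1 then 1 else 0))"
    by (rule sum.cong) (use converse_entry[OF x] in auto)
  then show ?thesis
    using x row_sum[OF x] col_sum[OF x] by (simp add: sum.distrib sum_subtractf)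
qed

lemma valency_eq:
  assumes "N > 1" shows "k = 2 * l + 1"
proof -
  have x: "1 \<in> {1..N}" using assms by simp
  have "k * k = (\<Sum>z=1..N. T 1 z * k)"
    using row_sum[OF x] by (simp add: sum_distrib_right[symmetric])
  also have "\<dots> = (\<Sum>z=1..N. T 1 z * (\<Sum>y=1..N. T z y))"
    using row_sum by simp
  also have "\<dots> = (\<Sum>z=1..N. \<Sum>y=1..N. T 1 z * T z y)"
    by (simp add: sum_distrib_left)
  also have "\<dots> = (\<Sum>y=1..N. l * T 1 y + (l + 1) * T y 1)"
    using x square by (subst sum.swap) simp
  also have "\<dots> = k * (2 * l + 1)"
    using row_sum[OF x] col_sum[OF x] by (simp add: sum.distrib sum_distrib_left[symmetric] algebra_simps)
  finally have "k * k = k * (2 * l + 1)" .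
  moreover have "k \<noteq> 0" using order_eq assms by simp
  ultimately show ?thesis by simp
qed

lemma inner_product_value:
  assumes "x \<in> {1..N}" "y \<in> {1..N}"
  shows "(if x = y then k else k - l - 1)
    = k * (if x = y then 1 else 0) + (k - l - 1) * T x y + (k - l - 1) * T y x"
  by (cases rule: entry_cases[OF assms]) (use assms diag in auto)

lemma tournament_family_product:
  assumes i: "i \<le> 2" and j: "j \<le> 2"
  shows "\<exists>c. \<forall>x\<in>{1..N}. \<forall>y\<in>{1..N}.
    (\<Sum>z=1..N. tournament_family T i x z * tournament_family T j z y)
      = (\<Sum>r\<le>2. c r * tournament_family T r x y)"
proof -
  consider "i = 0" | "j = 0" | "i = 1" "j = 1" | "i = 1" "j = 2" | "i = 2" "j = 1" | "i = 2" "j = 2"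
    using i j by linarith
  then show ?thesis
  proof cases
    case 1
    show ?thesis
      by (rule exI[of _ "\<lambda>r. if r = j then 1 else 0"])
        (use j 1 in \<open>auto simp: tournament_family_def sum_atMost_2\<close>)
  next
    case 2
    show ?thesis
      by (rule exI[of _ "\<lambda>r. if r = i then 1 else 0"])
        (use i 2 in \<open>auto simp: tournament_family_def sum_atMost_2\<close>)
  next
    case 3
    show ?thesis
      by (rule exI[of _ "\<lambda>r. if r = 1 then l else if r = 2 then l + 1 else 0"])
        (use 3 square in \<open>simp add: tournament_family_def sum_atMost_2\<close>)
  next
    case 4
    show ?thesis
      by (rule exI[of _ "\<lambda>r. if r = 0 then k else k - l - 1"])
        (use 4 row_inner_product inner_product_value in \<open>simp add: tournament_family_def sum_atMost_2\<close>)
  next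
    case 5
    show ?thesis
      by (rule exI[of _ "\<lambda>r. if r = 0 then k else k - l - 1"])
        (use 5 col_inner_product inner_product_value in \<open>simp add: tournament_family_def sum_atMost_2\<close>)
  next
    case 6
    show ?thesis
      by (rule exI[of _ "\<lambda>r. if r = 1 then l + 1 else if r = 2 then l else 0"])
        (use 6 square_converse in \<open>simp add: tournament_family_def sum_atMost_2\<close>)
  qed
qed

lemma assoc_scheme_tournament_family: "assoc_scheme N 2 (tournament_family T)"
  unfolding assoc_scheme_def
proof (intro conjI ballI allI impI tournament_family_product)
  fix i :: nat and x y assume "i \<le> 2" "x \<in> {1..N}" "y \<in> {1..N}"
  then show "tournament_family T i x y = 0 \<or> tournament_family T i x y = 1"
    using zero_one by (auto simp: tournament_family_def)
next
  fix x y assume "x \<in> {1..N}" "y \<in> {1..N}"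
  then show "(\<Sum>i\<le>2. tournament_family T i x y) = 1"
    using tournament[of x y] diag by (auto simp: tournament_family_def sum_atMost_2)
next
  fix i :: nat assume "i \<le> 2"
  then show "\<exists>j\<le>2. \<forall>x\<in>{1..N}. \<forall>y\<in>{1..N}. tournament_family T j x y = tournament_family T i y x"
    by (intro exI[of _ "if i = 0 then 0 else 3 - i"]) (auto simp: tournament_family_def)
qed (simp add: tournament_family_def)

lemma nonsym_class2_scheme_tournament_family:
  assumes "N > 1" shows "nonsym_class2_scheme N (tournament_family T)"
proof -
  have in_range: "1 \<in> {1..N}" "2 \<in> {1..N}" using assms by auto
  then have "T 1 2 \<noteq> T 2 1" using tournament[of 1 2] zero_one[of 1 2] by auto
  then have "tournament_family T 1 1 2 \<noteq> tournament_family T 2 1 2"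
    by (simp add: tournament_family_def)
  then have "\<exists>x\<in>{1..N}. \<exists>y\<in>{1..N}. tournament_family T 1 x y \<noteq> tournament_family T 2 x y"
    using in_range by blast
  then show ?thesis
    using assoc_scheme_tournament_family unfolding nonsym_class2_scheme_def by (simp add: tournament_family_def)
qed

lemma in_neighbourE:
  assumes "k > 0" and y: "y \<in> {1..N}"
  obtains x where "x \<in> {1..N}" "x \<noteq> y" "T x y = 1" "T y x = 0"
proof -
  have "\<exists>x\<in>{1..N}. T x y = 1"
  proof (rule ccontr)
    assume "\<not> ?thesis"
    then have "\<forall>x\<in>{1..N}. T x y = 0" using zero_one y by blast
    then show False using col_sum[OF y] \<open>k > 0\<close> by simp
  qed
  then obtain x where x: "x \<in> {1..N}" "T x y = 1" by blast
  moreover from x have "x \<noteq> y" using diag[OF y] by auto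
  moreover from calculation have "T y x = 0" using tournament[OF y x(1)] by simp
  ultimately show thesis using that by blast
qed

lemma exists_other_out_neighbour:
  assumes "k > 1" and x: "x \<in> {1..N}" and z: "z \<in> {1..N}"
  shows "\<exists>z'\<in>{1..N}. z' \<noteq> z \<and> T x z' = 1"
proof (rule ccontr)
  assume "\<not> ?thesis"
  then have "\<forall>z'\<in>{1..N} - {z}. T x z' = 0" using zero_one x by blast
  then have "k = T x z"
    using row_sum[OF x] sum.remove[of "{1..N}" z "T x"] z by simp
  then show False using zero_one[OF x z] \<open>k > 1\<close> by auto
qed

lemma missing_common_in_neighbour:
  assumes "k > 1" and w: "w \<in> {1..N}" and j: "j \<in> {1..N}" and "w \<noteq> j" and i: "i \<in> {1..N}"
  obtains z where "z \<in> {1..N}" "z \<noteq> i" "T z w = 1" "T z j = 0"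
proof -
  have "\<exists>z\<in>{1..N}. z \<noteq> i \<and> T z w = 1 \<and> T z j = 0"
  proof (rule ccontr)
    assume "\<not> ?thesis"
    then have nested: "T z j = 1" if "z \<in> {1..N}" "z \<noteq> i" "T z w = 1" for z
      using that zero_one[of z j] j by blast
    \<comment> \<open>Then w and j would have k - 1 common in-neighbours, but they have k - l - 1 = l.\<close>
    have "(\<Sum>z=1..N. T z w - (if z = i then 1 else 0)) \<le> (\<Sum>z=1..N. T z w * T z j)"
    proof (rule sum_mono)
      fix z assume z: "z \<in> {1..N}"
      show "T z w - (if z = i then 1 else 0) \<le> T z w * T z j"
        using nested[OF z] zero_one[OF z w] zero_one[OF z j] by (cases "z = i") auto
    qed
    then have "k - 1 \<le> k - l - 1"
      using i col_sum[OF w] col_inner_product[OF w j] \<open>w \<noteq> j\<close> by (simp add: sum_subtractf)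
    moreover have "N > 1" using order_eq w \<open>k > 1\<close> by simp
    ultimately show False using valency_eq \<open>k > 1\<close> by simp
  qed
  then show thesis using that by blast
qed

lemma out_neighbourhood_inj:
  assumes a: "a \<in> {1..N}" and b: "b \<in> {1..N}" and same: "\<forall>x\<in>{1..N}. T a x = T b x"
  shows "a = b"
proof (rule ccontr)
  assume "a \<noteq> b"
  moreover have "T a b = 0" using same b diag[OF b] by simp
  moreover have "T b a = 0" using same a diag[OF a] by simp
  ultimately show False using tournament[OF a b] by simp
qed

end

section \<open>Automorphisms and schurian schemes\<close>

definition tournament_aut :: "nat \<Rightarrow> mat \<Rightarrow> (nat \<Rightarrow> nat) set" where
  "tournament_aut N T =
     {\<sigma>. \<sigma> permutes {1..N} \<and> (\<forall>x\<in>{1..N}. \<forall>y\<in>{1..N}. T (\<sigma> x) (\<sigma> y) = T x y)}"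

lemma permutes_range: "\<sigma> permutes {1..N} \<Longrightarrow> x \<in> {1..N} \<Longrightarrow> \<sigma> x \<in> {1..N}"
  by (rule permutes_in_image[THEN iffD2])

lemma perm_mat_conjugate:
  assumes \<sigma>: "\<sigma> permutes {1..N}" and "x \<in> {1..N}" "y \<in> {1..N}"
  shows "(\<Sum>u=1..N. \<Sum>v=1..N. perm_mat \<sigma> u x * M u v * perm_mat \<sigma> v y) = M (\<sigma> x) (\<sigma> y)"
  using assms permutes_range[OF \<sigma>] by (simp add: perm_mat_def)

lemma aut_set_iff:
  "\<sigma> \<in> aut_set N d F \<longleftrightarrow> \<sigma> permutes {1..N} \<and>
    (\<forall>i\<le>d. \<forall>x\<in>{1..N}. \<forall>y\<in>{1..N}. F i (\<sigma> x) (\<sigma> y) = F i x y)"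
  unfolding aut_set_def using perm_mat_conjugate by auto

lemma aut_set_cong:
  assumes "\<And>i x y. i \<le> d \<Longrightarrow> x \<in> {1..N} \<Longrightarrow> y \<in> {1..N} \<Longrightarrow> F i x y = G i x y"
  shows "aut_set N d F = aut_set N d G"
proof (rule Set.set_eqI)
  fix \<sigma>
  show "\<sigma> \<in> aut_set N d F \<longleftrightarrow> \<sigma> \<in> aut_set N d G"
  proof (cases "\<sigma> permutes {1..N}")
    case True
    then show ?thesis unfolding aut_set_iff using assms permutes_range[OF True] by auto
  qed (simp add: aut_set_iff)
qed

lemma aut_set_tournament_family: "aut_set N 2 (tournament_family T) = tournament_aut N T"
proof (rule Set.set_eqI, rule iffI)
  fix \<sigma> assume "\<sigma> \<in> aut_set N 2 (tournament_family T)"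
  then show "\<sigma> \<in> tournament_aut N T"
    unfolding aut_set_iff tournament_aut_def by (auto dest!: spec[of _ 1] simp: tournament_family_def)
next
  fix \<sigma> assume "\<sigma> \<in> tournament_aut N T"
  then have "\<sigma> permutes {1..N}" and T: "\<forall>x\<in>{1..N}. \<forall>y\<in>{1..N}. T (\<sigma> x) (\<sigma> y) = T x y"
    by (auto simp: tournament_aut_def)
  moreover have "\<sigma> x = \<sigma> y \<longleftrightarrow> x = y" for x y
    using permutes_inj[OF \<open>\<sigma> permutes {1..N}\<close>] by (auto dest: injD)
  ultimately show "\<sigma> \<in> aut_set N 2 (tournament_family T)"
    unfolding aut_set_iff by (auto simp: tournament_family_def)
qed

lemma aut_set_eq_tournament_aut:
  assumes "\<And>x y. x \<in> {1..N} \<Longrightarrow> y \<in> {1..N} \<Longrightarrow> A 0 x y = (if x = y then 1 else 0)"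
    and "\<And>x y. x \<in> {1..N} \<Longrightarrow> y \<in> {1..N} \<Longrightarrow> A 2 x y = A 1 y x"
  shows "aut_set N 2 A = tournament_aut N (A 1)"
proof -
  have "aut_set N 2 A = aut_set N 2 (tournament_family (A 1))"
    by (rule aut_set_cong) (auto simp: tournament_family_def assms dest: le_neq_implies_less)
  then show ?thesis by (simp add: aut_set_tournament_family)
qed

lemma assoc_scheme_zero_one:
  "assoc_scheme N d F \<Longrightarrow> i \<le> d \<Longrightarrow> x \<in> {1..N} \<Longrightarrow> y \<in> {1..N} \<Longrightarrow> F i x y = 0 \<or> F i x y = 1"
  unfolding assoc_scheme_def by simp

lemma assoc_scheme_sum:
  "assoc_scheme N d F \<Longrightarrow> x \<in> {1..N} \<Longrightarrow> y \<in> {1..N} \<Longrightarrow> (\<Sum>i\<le>d. F i x y) = 1"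
  unfolding assoc_scheme_def by simp

lemma assoc_scheme_class_exists:
  assumes "assoc_scheme N d F" "x \<in> {1..N}" "y \<in> {1..N}"
  obtains i where "i \<le> d" "F i x y = 1"
proof -
  have "(\<Sum>i\<le>d. F i x y) = 1" using assoc_scheme_sum assms .
  then obtain i where "i \<le> d" "F i x y \<noteq> 0" by (metis atMost_iff sum.neutral zero_neq_one)
  then show thesis using that assoc_scheme_zero_one[OF assms(1)] assms by blast
qed

lemma assoc_scheme_class_unique:
  assumes F: "assoc_scheme N d F" and x: "x \<in> {1..N}" and y: "y \<in> {1..N}"
    and "i \<le> d" "j \<le> d" "F i x y = 1" "F j x y = 1"
  shows "i = j"
proof (rule ccontr)
  assume "i \<noteq> j"
  have nonneg: "\<forall>r\<in>{..d}. 0 \<le> F r x y"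
    using assoc_scheme_zero_one[OF F _ x y] by force
  have "(\<Sum>r\<in>{i, j}. F r x y) \<le> (\<Sum>r\<le>d. F r x y)"
    by (rule sum_mono2) (use assms nonneg in auto)
  also have "\<dots> = 1" using assoc_scheme_sum[OF F x y] .
  finally show False using \<open>i \<noteq> j\<close> assms by simp
qed

lemma orbital_group_subset_aut:
  assumes F: "assoc_scheme N d F" and sub: "subgroup G (sym_group N)"
    and orbitals: "{mat_restr N (F i) | i. i \<le> d} = {orbital_mat N G a b | a b. a \<in> {1..N} \<and> b \<in> {1..N}}"
  shows "G \<subseteq> aut_set N d F"
proof
  have perm: "g permutes {1..N}" if "g \<in> G" for g
    using subgroup.subset[OF sub] that by (auto simp: sym_group_def)
  have "id \<in> G" using subgroup.one_closed[OF sub] by (simp add: sym_group_def)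
  \<comment> \<open>The orbital of (x, y) is a class containing (x, y), hence the class of (x, y).\<close>
  have preserves_class: "F i (g x) (g y) = 1"
    if g: "g \<in> G" and x: "x \<in> {1..N}" and y: "y \<in> {1..N}" and i: "i \<le> d" and ixy: "F i x y = 1"
    for g x y i
  proof -
    obtain j where j: "j \<le> d" and orb: "orbital_mat N G x y = mat_restr N (F j)"
      using orbitals x y by blast
    have "orbital_mat N G x y x y = 1"
      using x y \<open>id \<in> G\<close> unfolding orbital_mat_def by (metis id_apply)
    then have "F j x y = 1" using orb x y by (simp add: mat_restr_def)
    then have "j = i" using assoc_scheme_class_unique[OF F x y j i _ ixy] by simp
    have gxy: "g x \<in> {1..N}" "g y \<in> {1..N}" using permutes_range[OF perm[OF g]] x y by simp_all
    then have "orbital_mat N G x y (g x) (g y) = 1"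
      using g unfolding orbital_mat_def by force
    then show ?thesis using orb gxy \<open>j = i\<close> by (simp add: mat_restr_def)
  qed
  fix g assume g: "g \<in> G"
  show "g \<in> aut_set N d F"
    unfolding aut_set_iff
  proof (intro conjI perm[OF g] allI impI ballI)
    fix i x y assume i: "i \<le> d" and x: "x \<in> {1..N}" and y: "y \<in> {1..N}"
    have gxy: "g x \<in> {1..N}" "g y \<in> {1..N}" using permutes_range[OF perm[OF g]] x y by simp_all
    obtain j where j: "j \<le> d" "F j x y = 1" using assoc_scheme_class_exists[OF F x y] .
    have "F i (g x) (g y) = 1 \<longleftrightarrow> F i x y = 1"
      using j preserves_class[OF g x y j] preserves_class[OF g x y i]
        assoc_scheme_class_unique[OF F gxy i j(1)] assoc_scheme_class_unique[OF F x y i j(1)] by auto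
    then show "F i (g x) (g y) = F i x y"
      using assoc_scheme_zero_one[OF F i gxy] assoc_scheme_zero_one[OF F i x y] by auto
  qed
qed

lemma schurian_imp_transitive_aut:
  assumes "assoc_scheme N d F" and "schurian N d F"
  shows "transitive_on N (aut_set N d F)"
proof -
  obtain G where "subgroup G (sym_group N)" and trans: "transitive_on N G"
    and "{mat_restr N (F i) | i. i \<le> d} = {orbital_mat N G a b | a b. a \<in> {1..N} \<and> b \<in> {1..N}}"
    using \<open>schurian N d F\<close> unfolding schurian_def by blast
  then have "G \<subseteq> aut_set N d F" using orbital_group_subset_aut[OF \<open>assoc_scheme N d F\<close>] by blast
  then show ?thesis using trans unfolding transitive_on_def by blast
qed

section \<open>Non-symmetric class 2 schemes are doubly regular tournaments\<close>

context
  fixes N :: nat and A :: "nat \<Rightarrow> mat"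
  assumes scheme: "nonsym_class2_scheme N A"
begin

lemma scheme_assoc: "assoc_scheme N 2 A"
  using scheme by (simp add: nonsym_class2_scheme_def)

lemma scheme_identity: "x \<in> {1..N} \<Longrightarrow> y \<in> {1..N} \<Longrightarrow> A 0 x y = (if x = y then 1 else 0)"
  using scheme_assoc unfolding assoc_scheme_def by simp

lemma scheme_transpose: "x \<in> {1..N} \<Longrightarrow> y \<in> {1..N} \<Longrightarrow> A 2 x y = A 1 y x"
  using scheme unfolding nonsym_class2_scheme_def by simp

lemma scheme_zero_one: "x \<in> {1..N} \<Longrightarrow> y \<in> {1..N} \<Longrightarrow> A 1 x y = 0 \<or> A 1 x y = 1"
  using scheme_assoc unfolding assoc_scheme_def by simp

lemma scheme_partition:
  assumes "x \<in> {1..N}" "y \<in> {1..N}"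
  shows "(if x = y then 1 else 0) + A 1 x y + A 1 y x = 1"
proof -
  have "(\<Sum>i\<le>2. A i x y) = 1"
    using scheme_assoc assms unfolding assoc_scheme_def by simp
  then show ?thesis
    using scheme_identity[OF assms] scheme_transpose[OF assms] by (simp add: sum_atMost_2)
qed

lemma scheme_diag: "x \<in> {1..N} \<Longrightarrow> A 1 x x = 0"
  using scheme_partition[of x x] by simp

lemma scheme_tournament: "x \<in> {1..N} \<Longrightarrow> y \<in> {1..N} \<Longrightarrow> x \<noteq> y \<Longrightarrow> A 1 x y + A 1 y x = 1"
  using scheme_partition[of x y] by simp

lemma scheme_product:
  assumes "i \<le> 2" "j \<le> 2"
  obtains c :: "nat \<Rightarrow> real" where "\<And>x y. x \<in> {1..N} \<Longrightarrow> y \<in> {1..N} \<Longrightarrow>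
    (\<Sum>z=1..N. A i x z * A j z y) = c 0 * (if x = y then 1 else 0) + c 1 * A 1 x y + c 2 * A 1 y x"
proof -
  have "\<forall>i\<le>2. \<forall>j\<le>2. \<exists>c. \<forall>x\<in>{1..N}. \<forall>y\<in>{1..N}.
      (\<Sum>z=1..N. A i x z * A j z y) = (\<Sum>r\<le>2. c r * A r x y)"
    using scheme_assoc unfolding assoc_scheme_def by (elim conjE) assumption
  then obtain c where c: "\<forall>x\<in>{1..N}. \<forall>y\<in>{1..N}. (\<Sum>z=1..N. A i x z * A j z y) = (\<Sum>r\<le>2. c r * A r x y)"
    using assms by blast
  show thesis
  proof (rule that[of c])
    fix x y assume "x \<in> {1..N}" "y \<in> {1..N}"
    then show "(\<Sum>z=1..N. A i x z * A j z y) = c 0 * (if x = y then 1 else 0) + c 1 * A 1 x y + c 2 * A 1 y x"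
      using c scheme_identity scheme_transpose by (simp add: sum_atMost_2)
  qed
qed

lemma scheme_nonempty: "N > 0"
  using scheme unfolding nonsym_class2_scheme_def by auto

lemma scheme_entry_idem: "x \<in> {1..N} \<Longrightarrow> y \<in> {1..N} \<Longrightarrow> A 1 x y * A 1 x y = A 1 x y"
  using scheme_zero_one[of x y] by auto

lemma scheme_regular:
  obtains k where "\<And>x. x \<in> {1..N} \<Longrightarrow> (\<Sum>z=1..N. A 1 x z) = k"
    and "\<And>y. y \<in> {1..N} \<Longrightarrow> (\<Sum>z=1..N. A 1 z y) = k"
proof -
  obtain c :: "nat \<Rightarrow> real" where c: "\<And>x y. x \<in> {1..N} \<Longrightarrow> y \<in> {1..N} \<Longrightarrow>
    (\<Sum>z=1..N. A 1 x z * A 2 z y) = c 0 * (if x = y then 1 else 0) + c 1 * A 1 x y + c 2 * A 1 y x"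
    using scheme_product[of 1 2] by auto
  obtain d :: "nat \<Rightarrow> real" where d: "\<And>x y. x \<in> {1..N} \<Longrightarrow> y \<in> {1..N} \<Longrightarrow>
    (\<Sum>z=1..N. A 2 x z * A 1 z y) = d 0 * (if x = y then 1 else 0) + d 1 * A 1 x y + d 2 * A 1 y x"
    using scheme_product[of 2 1] by auto
  have rows: "(\<Sum>z=1..N. A 1 x z) = c 0" if x: "x \<in> {1..N}" for x
  proof -
    have "(\<Sum>z=1..N. A 1 x z) = (\<Sum>z=1..N. A 1 x z * A 2 z x)"
      by (rule sum.cong) (use x scheme_transpose scheme_entry_idem in auto)
    then show ?thesis using c[OF x x] scheme_diag[OF x] by simp
  qed
  have cols: "(\<Sum>z=1..N. A 1 z y) = d 0" if y: "y \<in> {1..N}" for y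
  proof -
    have "(\<Sum>z=1..N. A 1 z y) = (\<Sum>z=1..N. A 2 y z * A 1 z y)"
      by (rule sum.cong) (use y scheme_transpose scheme_entry_idem in auto)
    then show ?thesis using d[OF y y] scheme_diag[OF y] by simp
  qed
  have "(\<Sum>x=1..N. \<Sum>z=1..N. A 1 x z) = (\<Sum>z=1..N. \<Sum>x=1..N. A 1 x z)"
    by (rule sum.swap)
  then have "real N * c 0 = real N * d 0" using rows cols by simp
  then have "c 0 = d 0" using scheme_nonempty by simp
  then show thesis using that rows cols by simp
qed

lemma scheme_out_neighbours_split:
  assumes rows: "\<And>x. x \<in> {1..N} \<Longrightarrow> (\<Sum>z=1..N. A 1 x z) = k"
    and x: "x \<in> {1..N}" and y: "y \<in> {1..N}"
  shows "(\<Sum>z=1..N. A 1 x z * A 1 z y) + A 1 x y + (\<Sum>z=1..N. A 1 x z * A 1 y z) = k"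
proof -
  have "(\<Sum>z=1..N. A 1 x z * A 1 z y) + A 1 x y + (\<Sum>z=1..N. A 1 x z * A 1 y z)
      = (\<Sum>z=1..N. A 1 x z * ((if z = y then 1 else 0) + A 1 z y + A 1 y z))"
    using y by (simp add: sum.distrib algebra_simps)
  also have "\<dots> = (\<Sum>z=1..N. A 1 x z)"
    by (rule sum.cong) (use y scheme_partition in auto)
  finally show ?thesis using rows[OF x] by simp
qed

lemma scheme_square:
  assumes rows: "\<And>x. x \<in> {1..N} \<Longrightarrow> (\<Sum>z=1..N. A 1 x z) = k"
  obtains l where "\<And>x y. x \<in> {1..N} \<Longrightarrow> y \<in> {1..N} \<Longrightarrow>
    (\<Sum>z=1..N. A 1 x z * A 1 z y) = l * A 1 x y + (l + 1) * A 1 y x"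
proof -
  obtain e :: "nat \<Rightarrow> real" where e: "\<And>x y. x \<in> {1..N} \<Longrightarrow> y \<in> {1..N} \<Longrightarrow>
    (\<Sum>z=1..N. A 1 x z * A 1 z y) = e 0 * (if x = y then 1 else 0) + e 1 * A 1 x y + e 2 * A 1 y x"
    using scheme_product[of 1 1] by auto
  have "\<exists>x\<in>{1..N}. \<exists>y\<in>{1..N}. A 1 x y \<noteq> A 2 x y"
    using scheme unfolding nonsym_class2_scheme_def by (elim conjE) assumption
  then obtain x0 y0 where x0: "x0 \<in> {1..N}" and y0: "y0 \<in> {1..N}" and "A 1 x0 y0 \<noteq> A 2 x0 y0"
    by blast
  then have arc: "A 1 x0 y0 \<noteq> A 1 y0 x0" using scheme_transpose by simp
  then have "x0 \<noteq> y0" by auto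
  have "(\<Sum>z=1..N. A 1 x0 z * A 1 z x0) = 0"
  proof (rule sum.neutral, rule ballI)
    fix z assume z: "z \<in> {1..N}"
    show "A 1 x0 z * A 1 z x0 = 0"
      using scheme_tournament[OF x0 z] scheme_zero_one[OF x0 z] scheme_diag[OF x0] by (cases "z = x0") auto
  qed
  then have e0: "e 0 = 0" using e[OF x0 x0] scheme_diag[OF x0] by simp
  \<comment> \<open>A1^2 + A1 is symmetric, since A1 A1^T is.\<close>
  have "(\<Sum>z=1..N. A 1 x0 z * A 1 y0 z) = (\<Sum>z=1..N. A 1 y0 z * A 1 x0 z)"
    by (simp add: mult.commute)
  then have "(\<Sum>z=1..N. A 1 x0 z * A 1 z y0) + A 1 x0 y0 = (\<Sum>z=1..N. A 1 y0 z * A 1 z x0) + A 1 y0 x0"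
    using scheme_out_neighbours_split[OF rows x0 y0] scheme_out_neighbours_split[OF rows y0 x0] by linarith
  then have "(e 1 - e 2 + 1) * (A 1 x0 y0 - A 1 y0 x0) = 0"
    using e[OF x0 y0] e[OF y0 x0] \<open>x0 \<noteq> y0\<close> by (simp add: algebra_simps)
  then have "e 2 = e 1 + 1" using arc by simp
  then show thesis using that e e0 by simp
qed

lemma scheme_doubly_regular_tournament: "\<exists>k l. doubly_regular_tournament N (A 1) k l"
proof -
  obtain k where rows: "\<And>x. x \<in> {1..N} \<Longrightarrow> (\<Sum>z=1..N. A 1 x z) = k"
    and cols: "\<And>y. y \<in> {1..N} \<Longrightarrow> (\<Sum>z=1..N. A 1 z y) = k"
    using scheme_regular by blast
  obtain l where "\<And>x y. x \<in> {1..N} \<Longrightarrow> y \<in> {1..N} \<Longrightarrow>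
    (\<Sum>z=1..N. A 1 x z * A 1 z y) = l * A 1 x y + (l + 1) * A 1 y x"
    using scheme_square[OF rows] by blast
  then have "doubly_regular_tournament N (A 1) k l"
    using scheme_zero_one scheme_diag scheme_tournament rows cols by unfold_locales
  then show ?thesis by blast
qed

end

section \<open>The doubled tournament\<close>

(* upper m j is the vertex n + j of the third block, where n = m + 1. *)
definition upper :: "nat \<Rightarrow> nat \<Rightarrow> nat" where "upper m j = Suc m + j"

lemma upper_inj [simp]: "upper m i = upper m j \<longleftrightarrow> i = j"
  by (simp add: upper_def)

lemma upper_ne [simp]:
  "upper m j \<notin> {1..m}" "\<not> upper m j \<le> m"
  "j \<in> {1..m} \<Longrightarrow> upper m j \<noteq> Suc m" "j \<in> {1..m} \<Longrightarrow> Suc m \<noteq> upper m j"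
  "i \<in> {1..m} \<Longrightarrow> upper m j \<noteq> i" "i \<in> {1..m} \<Longrightarrow> i \<noteq> upper m j"
  by (auto simp: upper_def)

lemma apex_ne [simp]: "Suc m \<notin> {1..m}" "i \<in> {1..m} \<Longrightarrow> Suc m \<noteq> i" "i \<in> {1..m} \<Longrightarrow> i \<noteq> Suc m"
  by auto

lemma vertex_range [simp]:
  "Suc m \<in> {1..2*m+1}" "i \<in> {1..m} \<Longrightarrow> i \<in> {1..2*m+1}"
  "j \<in> {1..m} \<Longrightarrow> upper m j \<in> {1..2*m+1}"
  by (auto simp: upper_def)

lemma vertex_cases:
  assumes "x \<in> {1..2*m+1}"
  obtains (lower) "x \<in> {1..m}" | (apex) "x = Suc m" | (upper) j where "j \<in> {1..m}" "x = upper m j"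
proof -
  consider "x \<le> m" | "x = Suc m" | "x > Suc m" by linarith
  then show thesis
  proof cases
    case 3
    with assms have "x - Suc m \<in> {1..m}" "x = upper m (x - Suc m)" by (auto simp: upper_def)
    then show thesis by (rule upper)
  qed (use assms lower apex in auto)
qed

lemma vertices_split: "{1..2*m+1} = {1..m} \<union> {Suc m} \<union> upper m ` {1..m}"
proof
  show "{1..2*m+1} \<subseteq> {1..m} \<union> {Suc m} \<union> upper m ` {1..m}"
  proof
    fix x assume "x \<in> {1..2*m+1}"
    then show "x \<in> {1..m} \<union> {Suc m} \<union> upper m ` {1..m}" by (cases rule: vertex_cases) auto
  qed
qed (auto simp: upper_def)

lemma sum_vertices_split:
  "(\<Sum>z=1..2*m+1. f z) = (\<Sum>z=1..m. f z) + f (Suc m) + (\<Sum>z=1..m. f (upper m z))"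
proof -
  have "(\<Sum>z=1..2*m+1. f z) = (\<Sum>z\<in>{1..m} \<union> {Suc m}. f z) + (\<Sum>z\<in>upper m ` {1..m}. f z)"
    unfolding vertices_split by (rule sum.union_disjoint) auto
  also have "(\<Sum>z\<in>{1..m} \<union> {Suc m}. f z) = (\<Sum>z=1..m. f z) + f (Suc m)"
    by (subst sum.union_disjoint) auto
  also have "(\<Sum>z\<in>upper m ` {1..m}. f z) = (\<Sum>z=1..m. f (upper m z))"
    by (rule sum.reindex_cong[of "upper m"]) (auto intro: inj_onI)
  finally show ?thesis .
qed

definition extend_perm :: "nat \<Rightarrow> (nat \<Rightarrow> nat) \<Rightarrow> nat \<Rightarrow> nat" where
  "extend_perm m \<sigma> x =
     (if x \<in> {1..m} then \<sigma> x
      else if Suc m < x \<and> x \<le> 2*m+1 then upper m (\<sigma> (x - Suc m)) else x)"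

lemma extend_perm_simps [simp]:
  "i \<in> {1..m} \<Longrightarrow> extend_perm m \<sigma> i = \<sigma> i"
  "extend_perm m \<sigma> (Suc m) = Suc m"
  "j \<in> {1..m} \<Longrightarrow> extend_perm m \<sigma> (upper m j) = upper m (\<sigma> j)"
  by (auto simp: extend_perm_def upper_def)

lemma extend_perm_outside: "x \<notin> {1..2*m+1} \<Longrightarrow> extend_perm m \<sigma> x = x"
  by (auto simp: extend_perm_def)

lemma extend_perm_id: "extend_perm m id = id"
proof
  fix x
  show "extend_perm m id x = id x"
  proof (cases "x \<in> {1..2*m+1}")
    case True
    then show ?thesis by (cases rule: vertex_cases) simp_all
  qed (simp add: extend_perm_outside)
qed

lemma extend_perm_comp:
  assumes "\<tau> permutes {1..m}" shows "extend_perm m (\<sigma> \<circ> \<tau>) = extend_perm m \<sigma> \<circ> extend_perm m \<tau>"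
proof
  fix x
  show "extend_perm m (\<sigma> \<circ> \<tau>) x = (extend_perm m \<sigma> \<circ> extend_perm m \<tau>) x"
  proof (cases "x \<in> {1..2*m+1}")
    case True
    then show ?thesis by (cases rule: vertex_cases) (use permutes_range[OF assms] in auto)
  qed (simp add: extend_perm_outside)
qed

lemma extend_perm_permutes:
  assumes \<sigma>: "\<sigma> permutes {1..m}" shows "extend_perm m \<sigma> permutes {1..2*m+1}"
proof (rule inj_imp_permutes)
  have inj: "\<sigma> x = \<sigma> y \<longleftrightarrow> x = y" for x y
    using permutes_inj[OF \<sigma>] by (auto dest: injD)
  note range = permutes_range[OF \<sigma>]
  have "extend_perm m (inv_into UNIV \<sigma>) \<circ> extend_perm m \<sigma> = id"
    using extend_perm_comp[OF \<sigma>, of "inv_into UNIV \<sigma>"] permutes_inv_o(2)[OF \<sigma>] extend_perm_id by simp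
  then show "inj_on (extend_perm m \<sigma>) {1..2*m+1}"
    by (intro inj_on_inverseI[of _ "extend_perm m (inv_into UNIV \<sigma>)"]) (simp add: fun_eq_iff)
  show "extend_perm m \<sigma> x \<in> {1..2*m+1}" if "x \<in> {1..2*m+1}" for x
  proof (cases rule: vertex_cases[OF that, case_names lower apex upper])
    case lower
    then show ?thesis using vertex_range(2)[OF range[OF lower]] by simp
  next
    case (upper j)
    then show ?thesis using vertex_range(3)[OF range[OF upper(1)]] by simp
  qed simp
qed (auto simp: extend_perm_outside)

lemma extend_perm_inj:
  assumes "\<sigma> permutes {1..m}" "\<tau> permutes {1..m}" "extend_perm m \<sigma> = extend_perm m \<tau>"
  shows "\<sigma> = \<tau>"
proof
  fix x
  show "\<sigma> x = \<tau> x"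
  proof (cases "x \<in> {1..m}")
    case True
    then show ?thesis using fun_cong[OF assms(3), of x] by simp
  qed (use assms in \<open>simp add: permutes_def\<close>)
qed

(* In B1 the vertex n has this property
   (with w = j for u = n + j) and, once k > 1, no other vertex has it. *)
definition apex_vertex :: "nat \<Rightarrow> mat \<Rightarrow> nat \<Rightarrow> bool" where
  "apex_vertex N T v \<longleftrightarrow> (\<forall>u\<in>{1..N}. T u v = 1 \<longrightarrow>
     (\<exists>w\<in>{1..N}. T v w = 1 \<and> T w u = 1 \<and>
        (\<forall>z\<in>{1..N}. T v z = 1 \<longrightarrow> (T z u = 1 \<longleftrightarrow> z = w \<or> T z w = 1))))"

lemma apex_vertex_aut:
  assumes \<sigma>: "\<sigma> \<in> tournament_aut N T" and v: "v \<in> {1..N}" and apex: "apex_vertex N T v"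
  shows "apex_vertex N T (\<sigma> v)"
  unfolding apex_vertex_def
proof (intro ballI impI)
  have perm: "\<sigma> permutes {1..N}" and T: "\<And>x y. x \<in> {1..N} \<Longrightarrow> y \<in> {1..N} \<Longrightarrow> T (\<sigma> x) (\<sigma> y) = T x y"
    using \<sigma> by (auto simp: tournament_aut_def)
  have preimage: "\<exists>x'\<in>{1..N}. x = \<sigma> x'" if "x \<in> {1..N}" for x
    using permutes_image[OF perm] that by (metis imageE)
  have inj: "\<sigma> x = \<sigma> y \<longleftrightarrow> x = y" for x y
    using permutes_inj[OF perm] by (auto dest: injD)
  fix u assume "u \<in> {1..N}" and "T u (\<sigma> v) = 1"
  then obtain u' where u': "u' \<in> {1..N}" "u = \<sigma> u'" and "T u' v = 1"
    using preimage T v by metis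
  then obtain w where w: "w \<in> {1..N}" "T v w = 1" "T w u' = 1"
    and between: "\<And>z. z \<in> {1..N} \<Longrightarrow> T v z = 1 \<Longrightarrow> (T z u' = 1 \<longleftrightarrow> z = w \<or> T z w = 1)"
    using apex unfolding apex_vertex_def by metis
  show "\<exists>w\<in>{1..N}. T (\<sigma> v) w = 1 \<and> T w u = 1 \<and>
      (\<forall>z\<in>{1..N}. T (\<sigma> v) z = 1 \<longrightarrow> (T z u = 1 \<longleftrightarrow> z = w \<or> T z w = 1))"
  proof (intro bexI conjI ballI impI)
    show "\<sigma> w \<in> {1..N}" using permutes_range[OF perm w(1)] .
    show "T (\<sigma> v) (\<sigma> w) = 1" "T (\<sigma> w) u = 1" using T v w u' by simp_all
    fix z assume "z \<in> {1..N}" "T (\<sigma> v) z = 1"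
    then obtain z' where "z' \<in> {1..N}" "z = \<sigma> z'" "T v z' = 1"
      using preimage T v by metis
    then show "T z u = 1 \<longleftrightarrow> z = \<sigma> w \<or> T z (\<sigma> w) = 1"
      using between[of z'] T u' w inj by simp
  qed
qed

locale tournament_doubling = doubly_regular_tournament m "A 1" k l
  for m :: nat and A :: "nat \<Rightarrow> mat" and k l :: real +
  assumes identity: "\<And>x y. x \<in> {1..m} \<Longrightarrow> y \<in> {1..m} \<Longrightarrow> A 0 x y = (if x = y then 1 else 0)"
    and transpose: "\<And>x y. x \<in> {1..m} \<Longrightarrow> y \<in> {1..m} \<Longrightarrow> A 2 x y = A 1 y x"
    and order_gt_3: "m > 3"
begin

lemma order_base: "real m = 2 * k + 1"
  using order_eq order_gt_3 by simp

lemma valency_base: "k = 2 * l + 1"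
  using valency_eq order_gt_3 by simp

lemma valency_gt_1: "k > 1"
  using order_base order_gt_3 by simp

lemma B1_lower_lower [simp]: "i \<in> {1..m} \<Longrightarrow> j \<in> {1..m} \<Longrightarrow> B1 m A i j = A 1 i j"
  by (simp add: B1_def)

lemma B1_lower_apex [simp]: "i \<in> {1..m} \<Longrightarrow> B1 m A i (Suc m) = 0"
  by (simp add: B1_def)

lemma B1_lower_upper [simp]:
  "i \<in> {1..m} \<Longrightarrow> j \<in> {1..m} \<Longrightarrow> B1 m A i (upper m j) = (if i = j then 1 else 0) + A 1 i j"
  using identity[of i j] by (auto simp: B1_def upper_def)

lemma B1_apex_lower [simp]: "j \<in> {1..m} \<Longrightarrow> B1 m A (Suc m) j = 1"
  by (simp add: B1_def)

lemma B1_apex_apex [simp]: "B1 m A (Suc m) (Suc m) = 0"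
  by (simp add: B1_def)

lemma B1_apex_upper [simp]: "j \<in> {1..m} \<Longrightarrow> B1 m A (Suc m) (upper m j) = 0"
  by (auto simp: B1_def upper_def)

lemma B1_upper_lower [simp]: "i \<in> {1..m} \<Longrightarrow> j \<in> {1..m} \<Longrightarrow> B1 m A (upper m i) j = A 1 i j"
  by (auto simp: B1_def upper_def)

lemma B1_upper_apex [simp]: "i \<in> {1..m} \<Longrightarrow> B1 m A (upper m i) (Suc m) = 1"
  by (auto simp: B1_def upper_def)

lemma B1_upper_upper [simp]:
  "i \<in> {1..m} \<Longrightarrow> j \<in> {1..m} \<Longrightarrow> B1 m A (upper m i) (upper m j) = A 1 j i"
  using transpose[of i j] by (auto simp: B1_def upper_def)

lemma B1_zero_one:
  assumes "x \<in> {1..2*m+1}" "y \<in> {1..2*m+1}"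
  shows "B1 m A x y = 0 \<or> B1 m A x y = 1"
  by (cases rule: vertex_cases[OF assms(1)]; cases rule: vertex_cases[OF assms(2)])
    (use zero_one diag in auto)

lemma B1_diag: "x \<in> {1..2*m+1} \<Longrightarrow> B1 m A x x = 0"
  by (cases rule: vertex_cases) (use diag in auto)

lemma B1_tournament:
  assumes "x \<in> {1..2*m+1}" "y \<in> {1..2*m+1}" "x \<noteq> y"
  shows "B1 m A x y + B1 m A y x = 1"
  by (cases rule: vertex_cases[OF assms(1)]; cases rule: vertex_cases[OF assms(2)])
    (use assms(3) tournament diag in \<open>auto simp: add.commute\<close>)

lemma B1_row_sum:
  assumes "x \<in> {1..2*m+1}" shows "(\<Sum>z=1..2*m+1. B1 m A x z) = real m"
proof -
  note [simp] = row_sum[simplified] col_sum[simplified] order_base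
  show ?thesis
    unfolding sum_vertices_split by (cases rule: vertex_cases[OF assms]) (simp_all add: sum.distrib)
qed

lemma B1_col_sum:
  assumes "y \<in> {1..2*m+1}" shows "(\<Sum>z=1..2*m+1. B1 m A z y) = real m"
proof -
  note [simp] = row_sum[simplified] col_sum[simplified] order_base
  show ?thesis
    unfolding sum_vertices_split by (cases rule: vertex_cases[OF assms]) (simp_all add: sum.distrib)
qed

lemma B1_square:
  assumes x: "x \<in> {1..2*m+1}" and y: "y \<in> {1..2*m+1}"
  shows "(\<Sum>z=1..2*m+1. B1 m A x z * B1 m A z y) = k * B1 m A x y + (k + 1) * B1 m A y x"
proof -
  note [simp] = row_sum[simplified] col_sum[simplified] diag[simplified] square[simplified]
    square_converse[simplified] row_inner_product[simplified] col_inner_product[simplified]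
    valency_base
  have lower_upper: "(\<Sum>z=1..2*m+1. B1 m A i z * B1 m A z (upper m j))
      = k * B1 m A i (upper m j) + (k + 1) * B1 m A (upper m j) i"
    if i: "i \<in> {1..m}" and j: "j \<in> {1..m}" for i j
    unfolding sum_vertices_split
    by (cases rule: entry_cases[OF i j]) (use i j in \<open>simp_all add: sum.distrib ring_distribs\<close>)
  have upper_lower: "(\<Sum>z=1..2*m+1. B1 m A (upper m j) z * B1 m A z i)
      = k * B1 m A (upper m j) i + (k + 1) * B1 m A i (upper m j)"
    if i: "i \<in> {1..m}" and j: "j \<in> {1..m}" for i j
    unfolding sum_vertices_split
    by (cases rule: entry_cases[OF i j]) (use i j in \<open>simp_all add: sum.distrib ring_distribs\<close>)
  show ?thesis
    using lower_upper upper_lower unfolding sum_vertices_split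
    by (cases rule: vertex_cases[OF x]; cases rule: vertex_cases[OF y])
      (simp_all add: sum.distrib ring_distribs)
qed

end

section \<open>Automorphisms of the doubled tournament\<close>

sublocale tournament_doubling \<subseteq> doubled: doubly_regular_tournament "2*m+1" "B1 m A" "real m" k
  using B1_zero_one B1_diag B1_tournament B1_row_sum B1_col_sum B1_square by unfold_locales

context tournament_doubling
begin

lemma apex_vertex_apex: "apex_vertex (2*m+1) (B1 m A) (Suc m)"
  unfolding apex_vertex_def
proof (intro ballI impI)
  fix u assume u: "u \<in> {1..2*m+1}" and "B1 m A u (Suc m) = 1"
  then obtain j where j: "j \<in> {1..m}" and "u = upper m j"
    by (cases rule: vertex_cases) auto
  show "\<exists>w\<in>{1..2*m+1}. B1 m A (Suc m) w = 1 \<and> B1 m A w u = 1 \<and>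
    (\<forall>z\<in>{1..2*m+1}. B1 m A (Suc m) z = 1 \<longrightarrow> (B1 m A z u = 1 \<longleftrightarrow> z = w \<or> B1 m A z w = 1))"
  proof (intro bexI conjI ballI impI)
    fix z assume "z \<in> {1..2*m+1}" "B1 m A (Suc m) z = 1"
    then show "B1 m A z u = 1 \<longleftrightarrow> z = j \<or> B1 m A z j = 1"
      using j \<open>u = upper m j\<close> zero_one[of z j] diag[OF j] by (cases rule: vertex_cases) auto
  qed (use j \<open>u = upper m j\<close> diag[OF j] in auto)
qed

lemma not_apex_vertex_lower:
  assumes i: "i \<in> {1..m}" shows "\<not> apex_vertex (2*m+1) (B1 m A) i"
proof
  assume is_apex: "apex_vertex (2*m+1) (B1 m A) i"
  obtain j where j: "j \<in> {1..m}" "j \<noteq> i" "A 1 j i = 1" "A 1 i j = 0"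
    using in_neighbourE[OF _ i] valency_gt_1 by auto
  then have "B1 m A j i = 1" using i by simp
  then obtain w where w: "w \<in> {1..2*m+1}" "B1 m A i w = 1" "B1 m A w j = 1"
    and between: "\<And>z. z \<in> {1..2*m+1} \<Longrightarrow> B1 m A i z = 1 \<Longrightarrow>
      (B1 m A z j = 1 \<longleftrightarrow> z = w \<or> B1 m A z w = 1)"
    using is_apex vertex_range(2)[OF j(1)] unfolding apex_vertex_def by blast
  show False
  proof (cases rule: vertex_cases[OF w(1), case_names lower apex upper])
    case lower
    then show False using between[OF vertex_range(3)[OF i]] i j w diag[OF i] by simp
  next
    case apex
    then show False using w i by simp
  next
    case (upper z)
    then have "z \<noteq> i" using w j by auto
    then have "A 1 i z = 1" using w i upper by simp
    obtain z2 where z2: "z2 \<in> {1..m}" "z2 \<noteq> z" "A 1 i z2 = 1"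
      using exists_other_out_neighbour[OF valency_gt_1 i \<open>z \<in> {1..m}\<close>] by blast
    then have "z2 \<noteq> i" using diag[OF i] by auto
    have "A 1 z2 j = 1 \<longleftrightarrow> A 1 z2 z = 1"
      using between[of z2] z2 upper i j(1) by simp
    moreover have "A 1 z2 j = 1 \<longleftrightarrow> A 1 z z2 = 1"
      using between[OF vertex_range(3)[OF z2(1)]] z2 upper i j(1) \<open>z2 \<noteq> i\<close> by simp
    ultimately show False
      using tournament[of z2 z] zero_one[of z2 z] z2 upper by auto
  qed
qed

lemma not_apex_vertex_upper:
  assumes i: "i \<in> {1..m}" shows "\<not> apex_vertex (2*m+1) (B1 m A) (upper m i)"
proof
  assume is_apex: "apex_vertex (2*m+1) (B1 m A) (upper m i)"
  obtain j where j: "j \<in> {1..m}" "j \<noteq> i" "A 1 j i = 1" "A 1 i j = 0"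
    using in_neighbourE[OF _ i] valency_gt_1 by auto
  then have "B1 m A j (upper m i) = 1" using i by simp
  then obtain w where w: "w \<in> {1..2*m+1}" "B1 m A (upper m i) w = 1" "B1 m A w j = 1"
    and between: "\<And>z. z \<in> {1..2*m+1} \<Longrightarrow> B1 m A (upper m i) z = 1 \<Longrightarrow>
      (B1 m A z j = 1 \<longleftrightarrow> z = w \<or> B1 m A z w = 1)"
    using is_apex vertex_range(2)[OF j(1)] unfolding apex_vertex_def by blast
  have apex_side: "Suc m = w \<or> B1 m A (Suc m) w = 1"
    using between[of "Suc m"] i j by simp
  show False
  proof (cases rule: vertex_cases[OF w(1), case_names lower apex upper])
    case apex
    then show False using between[OF vertex_range(3)[OF j(1)]] i j diag[OF j(1)] by simp
  next
    case (upper z)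
    then show False using apex_side by simp
  next
    case lower
    have "A 1 w j = 1" using w j lower by simp
    then have "w \<noteq> j" using diag[OF j(1)] by auto
    then obtain z where z: "z \<in> {1..m}" "z \<noteq> i" "A 1 z w = 1" "A 1 z j = 0"
      using missing_common_in_neighbour[OF valency_gt_1 lower j(1) _ i] by blast
    show False
    proof (cases "A 1 i z = 1")
      case True
      then show False using between[of z] i z j(1) lower by simp
    next
      case False
      then have "A 1 z i = 1" using tournament[OF i z(1)] zero_one[OF i z(1)] \<open>z \<noteq> i\<close> by auto
      then show False using between[OF vertex_range(3)[OF z(1)]] i z j(1) lower by simp
    qed
  qed
qed

lemma aut_fixes_apex:
  assumes \<sigma>: "\<sigma> \<in> tournament_aut (2*m+1) (B1 m A)" shows "\<sigma> (Suc m) = Suc m"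
proof -
  have "\<sigma> permutes {1..2*m+1}" using \<sigma> by (simp add: tournament_aut_def)
  then have v: "\<sigma> (Suc m) \<in> {1..2*m+1}" by (rule permutes_range) simp
  have apex: "apex_vertex (2*m+1) (B1 m A) (\<sigma> (Suc m))"
    using apex_vertex_aut[OF \<sigma> _ apex_vertex_apex] by simp
  show ?thesis
  proof (cases rule: vertex_cases[OF v, case_names lower apex upper])
    case lower
    then show ?thesis using not_apex_vertex_lower apex by blast
  next
    case (upper j)
    then show ?thesis using not_apex_vertex_upper apex by metis
  qed
qed

lemma aut_intransitive: "\<not> transitive_on (2*m+1) (tournament_aut (2*m+1) (B1 m A))"
proof
  assume "transitive_on (2*m+1) (tournament_aut (2*m+1) (B1 m A))"
  moreover have "Suc m \<in> {1..2*m+1}" "1 \<in> {1..2*m+1}" by simp_all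
  ultimately obtain \<sigma> where \<sigma>: "\<sigma> \<in> tournament_aut (2*m+1) (B1 m A)" and "\<sigma> (Suc m) = 1"
    unfolding transitive_on_def by blast
  moreover have "\<sigma> (Suc m) = Suc m" using aut_fixes_apex[OF \<sigma>] .
  ultimately show False using order_gt_3 by simp
qed

lemma extend_perm_aut:
  assumes \<sigma>: "\<sigma> \<in> tournament_aut m (A 1)"
  shows "extend_perm m \<sigma> \<in> tournament_aut (2*m+1) (B1 m A)"
proof -
  have perm: "\<sigma> permutes {1..m}" and A: "\<And>x y. x \<in> {1..m} \<Longrightarrow> y \<in> {1..m} \<Longrightarrow> A 1 (\<sigma> x) (\<sigma> y) = A 1 x y"
    using \<sigma> by (auto simp: tournament_aut_def)
  have inj: "\<sigma> x = \<sigma> y \<longleftrightarrow> x = y" for x y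
    using permutes_inj[OF perm] by (auto dest: injD)
  note range = permutes_range[OF perm]
  have "B1 m A (extend_perm m \<sigma> x) (extend_perm m \<sigma> y) = B1 m A x y"
    if x: "x \<in> {1..2*m+1}" and y: "y \<in> {1..2*m+1}" for x y
    by (cases rule: vertex_cases[OF x]; cases rule: vertex_cases[OF y]) (simp_all add: range[simplified] A[simplified] inj)
  then show ?thesis using extend_perm_permutes[OF perm] by (simp add: tournament_aut_def)
qed

lemma aut_maps_lower:
  assumes \<tau>: "\<tau> \<in> tournament_aut (2*m+1) (B1 m A)" and x: "x \<in> {1..m}"
  shows "\<tau> x \<in> {1..m}"
proof -
  have perm: "\<tau> permutes {1..2*m+1}" using \<tau> by (simp add: tournament_aut_def)
  have "B1 m A (\<tau> (Suc m)) (\<tau> x) = 1" using \<tau> x by (simp add: tournament_aut_def)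
  then have "B1 m A (Suc m) (\<tau> x) = 1" using aut_fixes_apex[OF \<tau>] by simp
  then show ?thesis
    by (cases rule: vertex_cases[OF permutes_range[OF perm vertex_range(2)[OF x]]]) auto
qed

lemma aut_maps_upper:
  assumes \<tau>: "\<tau> \<in> tournament_aut (2*m+1) (B1 m A)" and j: "j \<in> {1..m}"
  obtains j' where "j' \<in> {1..m}" "\<tau> (upper m j) = upper m j'"
proof -
  have perm: "\<tau> permutes {1..2*m+1}" using \<tau> by (simp add: tournament_aut_def)
  have "B1 m A (\<tau> (upper m j)) (\<tau> (Suc m)) = 1"
    using \<tau> j vertex_range(3)[OF j] by (simp add: tournament_aut_def)
  then have "B1 m A (\<tau> (upper m j)) (Suc m) = 1" using aut_fixes_apex[OF \<tau>] by simp
  then show thesis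
    using that by (cases rule: vertex_cases[OF permutes_range[OF perm vertex_range(3)[OF j]]]) auto
qed

lemma aut_upper:
  assumes \<tau>: "\<tau> \<in> tournament_aut (2*m+1) (B1 m A)" and j: "j \<in> {1..m}"
  shows "\<tau> (upper m j) = upper m (\<tau> j)"
proof -
  have perm: "\<tau> permutes {1..2*m+1}"
    and B: "\<And>x y. x \<in> {1..2*m+1} \<Longrightarrow> y \<in> {1..2*m+1} \<Longrightarrow> B1 m A (\<tau> x) (\<tau> y) = B1 m A x y"
    using \<tau> by (auto simp: tournament_aut_def)
  obtain j' where j': "j' \<in> {1..m}" "\<tau> (upper m j) = upper m j'" using aut_maps_upper[OF \<tau> j] .
  have "\<tau> ` {1..m} = {1..m}"
    using aut_maps_lower[OF \<tau>] inj_on_subset[OF permutes_inj_on[OF perm]]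
    by (intro endo_inj_surj) auto
  \<comment> \<open>The arcs from upper m j into {1..m} are those of j, and \<tau> carries them to those
    of upper m j', so j' and \<tau> j have the same out-neighbours in A1.\<close>
  have "A 1 j' y = A 1 (\<tau> j) y" if "y \<in> {1..m}" for y
  proof -
    obtain y0 where y0: "y0 \<in> {1..m}" "y = \<tau> y0"
      using \<open>\<tau> ` {1..m} = {1..m}\<close> \<open>y \<in> {1..m}\<close> by (metis imageE)
    have "A 1 j' y = B1 m A (\<tau> (upper m j)) (\<tau> y0)"
      using j' y0 aut_maps_lower[OF \<tau>] by simp
    also have "\<dots> = B1 m A (\<tau> j) (\<tau> y0)"
      using B[OF vertex_range(3)[OF j] vertex_range(2)[OF y0(1)]] B[OF vertex_range(2)[OF j] vertex_range(2)[OF y0(1)]]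
        j y0 by simp
    also have "\<dots> = A 1 (\<tau> j) y" using y0 aut_maps_lower[OF \<tau>] j by simp
    finally show ?thesis .
  qed
  then have "j' = \<tau> j"
    using out_neighbourhood_inj[OF j'(1) aut_maps_lower[OF \<tau> j]] by blast
  then show ?thesis using j' by simp
qed

lemma aut_is_extension:
  assumes \<tau>: "\<tau> \<in> tournament_aut (2*m+1) (B1 m A)"
  obtains \<sigma> where "\<sigma> \<in> tournament_aut m (A 1)" "extend_perm m \<sigma> = \<tau>"
proof -
  have perm: "\<tau> permutes {1..2*m+1}"
    and B: "\<And>x y. x \<in> {1..2*m+1} \<Longrightarrow> y \<in> {1..2*m+1} \<Longrightarrow> B1 m A (\<tau> x) (\<tau> y) = B1 m A x y"
    using \<tau> by (auto simp: tournament_aut_def)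
  define \<sigma> where "\<sigma> x = (if x \<in> {1..m} then \<tau> x else x)" for x
  have "\<sigma> permutes {1..m}"
  proof (rule inj_imp_permutes)
    show "inj_on \<sigma> {1..m}"
      using inj_on_subset[OF permutes_inj_on[OF perm]] by (auto simp: \<sigma>_def inj_on_def)
  qed (auto simp: \<sigma>_def aut_maps_lower[OF \<tau>, simplified])
  moreover have "A 1 (\<sigma> x) (\<sigma> y) = A 1 x y" if "x \<in> {1..m}" "y \<in> {1..m}" for x y
    using B[of x y] that aut_maps_lower[OF \<tau>] by (simp add: \<sigma>_def)
  ultimately have "\<sigma> \<in> tournament_aut m (A 1)" by (simp add: tournament_aut_def)
  moreover have "extend_perm m \<sigma> x = \<tau> x" for x
  proof (cases "x \<in> {1..2*m+1}")
    case True
    then show ?thesis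
      by (cases rule: vertex_cases) (simp_all add: \<sigma>_def aut_fixes_apex[OF \<tau>] aut_upper[OF \<tau>])
  qed (use perm in \<open>simp add: extend_perm_outside permutes_def\<close>)
  ultimately show thesis using that by blast
qed

lemma aut_group_iso: "aut_group m 2 A \<cong> aut_group (2*m+1) 2 (Bfam m A)"
proof -
  have X: "carrier (aut_group m 2 A) = tournament_aut m (A 1)"
    using aut_set_eq_tournament_aut[of m A] identity transpose by (simp add: aut_group_def)
  have Y: "carrier (aut_group (2*m+1) 2 (Bfam m A)) = tournament_aut (2*m+1) (B1 m A)"
    by (simp add: aut_group_def Bfam_eq_tournament_family aut_set_tournament_family)
  have perm: "\<sigma> permutes {1..m}" if "\<sigma> \<in> tournament_aut m (A 1)" for \<sigma>
    using that by (simp add: tournament_aut_def)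
  have "extend_perm m \<in> iso (aut_group m 2 A) (aut_group (2*m+1) 2 (Bfam m A))"
  proof (rule isoI)
    show "extend_perm m \<in> hom (aut_group m 2 A) (aut_group (2*m+1) 2 (Bfam m A))"
    proof (rule homI)
      fix \<sigma> assume "\<sigma> \<in> carrier (aut_group m 2 A)"
      then show "extend_perm m \<sigma> \<in> carrier (aut_group (2*m+1) 2 (Bfam m A))"
        using extend_perm_aut unfolding X Y by blast
    next
      fix \<sigma> \<tau> assume "\<tau> \<in> carrier (aut_group m 2 A)"
      then have "\<tau> permutes {1..m}" using perm unfolding X by blast
      then show "extend_perm m (\<sigma> \<otimes>\<^bsub>aut_group m 2 A\<^esub> \<tau>)
          = extend_perm m \<sigma> \<otimes>\<^bsub>aut_group (2*m+1) 2 (Bfam m A)\<^esub> extend_perm m \<tau>"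
        using extend_perm_comp by (simp add: aut_group_def sym_group_def)
    qed
    show "bij_betw (extend_perm m) (carrier (aut_group m 2 A)) (carrier (aut_group (2*m+1) 2 (Bfam m A)))"
      unfolding X Y bij_betw_def
    proof
      show "inj_on (extend_perm m) (tournament_aut m (A 1))"
        by (rule inj_onI) (use extend_perm_inj perm in blast)
      show "extend_perm m ` tournament_aut m (A 1) = tournament_aut (2*m+1) (B1 m A)"
        using extend_perm_aut aut_is_extension by (metis image_subsetI subsetI subset_antisym imageI)
    qed
  qed
  then show ?thesis unfolding is_iso_def by blast
qed

end

theorem theorem4:
  fixes m :: nat and A :: "nat \<Rightarrow> mat"
  assumes "m \<ge> 7"
    and "nonsym_class2_scheme m A"
  shows "nonsym_class2_scheme (2*m+1) (Bfam m A)
    \<and> \<not> transitive_on (2*m+1) (aut_set (2*m+1) 2 (Bfam m A))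
    \<and> \<not> schurian (2*m+1) 2 (Bfam m A)
    \<and> aut_group m 2 A \<cong> aut_group (2*m+1) 2 (Bfam m A)"
proof -
  obtain k l where "doubly_regular_tournament m (A 1) k l"
    using scheme_doubly_regular_tournament[OF assms(2)] by blast
  then interpret tournament_doubling m A k l
    using assms scheme_identity[OF assms(2)] scheme_transpose[OF assms(2)]
    by (simp add: tournament_doubling_def tournament_doubling_axioms_def)
  have Y: "Bfam m A = tournament_family (B1 m A)" by (rule Bfam_eq_tournament_family)
  have intransitive: "\<not> transitive_on (2*m+1) (aut_set (2*m+1) 2 (Bfam m A))"
    using aut_intransitive by (simp add: Y aut_set_tournament_family)
  moreover have "\<not> schurian (2*m+1) 2 (Bfam m A)"
    using schurian_imp_transitive_aut[OF doubled.assoc_scheme_tournament_family] intransitive by (auto simp: Y)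
  moreover have "nonsym_class2_scheme (2*m+1) (Bfam m A)"
    using doubled.nonsym_class2_scheme_tournament_family order_gt_3 by (simp add: Y)
  ultimately show ?thesis using aut_group_iso by blast
qed

end
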